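(* Let $d\ge1$, let $\Lambda\subset\mathbb{R}^{2d}$ be a lattice, let $r>0$ and let $\phi\in\ell^1(\Lambda)$ be non-negative with $$1-\delta\le\sum_{\lambda\in\Lambda}\phi(\lambda)\le1,\qquad\sum_{\lambda\in\Lambda}|\lambda|\,|\phi(\lambda)|<\infty$$ for some $0\le\delta\le1$. Then there exists a constant $C$ depending on $r$ such that $$\Vert\chi_\Omega-\chi_\Omega*_\Lambda\phi\Vert_{\ell^1(\Lambda)}\le C\Big(\sum_{\lambda\in\Lambda}|\lambda|\,|\phi(\lambda)|+1\Big)\#\partial^{r_\Lambda}_\Lambda\Omega+\delta\,\#(\Omega\cap\Lambda)$$ for every compact set $\Omega\subset\mathbb{R}^{2d}$, where $r_\Lambda=r+l_M$ and $l_M$ is the diameter of the fundamental domain of $\Lambda$.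
   Context: A lattice is $\Lambda=M\mathbb{Z}^{2d}$ with $M$ an invertible real $2d\times2d$ matrix; $l_M$ denotes the diameter of the (fixed) fundamental domain of $\Lambda$. The discrete convolution is $(a*_\Lambda b)(\lambda)=\sum_{\lambda'\in\Lambda}a(\lambda')b(\lambda-\lambda')$, and $\Vert c\Vert_{\ell^1(\Lambda)}=\sum_{\lambda\in\Lambda}|c(\lambda)|$; $\chi_\Omega$ is regarded as a function on $\Lambda$. $B(z,r)$ is the open ball; for $r>0$, $\partial^r_\Lambda\Omega=\Lambda\cap(\partial\Omega+B(0,r))$, and $\#$ denotes cardinality. *)

theory Defs
  imports "HOL-Analysis.Analysis"
begin

definition lattice :: "real^'n^'n \<Rightarrow> (real^'n) set" where
  "lattice M = range (\<lambda>k::int^'n. M *v (\<chi> i. of_int (k $ i)))"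

definition fund_domain :: "real^'n^'n \<Rightarrow> (real^'n) set" where
  "fund_domain M = (\<lambda>x. M *v x) ` {x. \<forall>i. 0 \<le> x $ i \<and> x $ i < 1}"

definition lM :: "real^'n^'n \<Rightarrow> real" where
  "lM M = diameter (fund_domain M)"

definition chi :: "(real^'n) set \<Rightarrow> real^'n \<Rightarrow> real" where
  "chi \<Omega> x = (if x \<in> \<Omega> then 1 else 0)"

definition lconv :: "(real^'n) set \<Rightarrow> (real^'n \<Rightarrow> real) \<Rightarrow> (real^'n \<Rightarrow> real) \<Rightarrow> real^'n \<Rightarrow> real" where
  "lconv L a b l = (\<Sum>\<^sub>\<infinity>l'\<in>L. a l' * b (l - l'))"

definition l1norm :: "(real^'n) set \<Rightarrow> (real^'n \<Rightarrow> real) \<Rightarrow> real" where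
  "l1norm L c = (\<Sum>\<^sub>\<infinity>l\<in>L. \<bar>c l\<bar>)"

definition lattice_boundary :: "(real^'n) set \<Rightarrow> real \<Rightarrow> (real^'n) set \<Rightarrow> (real^'n) set" where
  "lattice_boundary L r \<Omega> = L \<inter> {x + y | x y. x \<in> frontier \<Omega> \<and> y \<in> ball 0 r}"

end

theory Submission
  imports Defs
begin

(*
  If l and l - \<mu> lie on different sides of \<Omega>, the segment between them meets the
  frontier of \<Omega>. Sample the segment at N + 1 equally spaced points, N = \<lceil>|\<mu>|/r\<rceil>; some
  sample lies within r of the crossing, hence in a lattice tile q + M [0,1)^n with q in
  the discrete boundary of radius r + l_M, and the pair (sample index, q) determines l.
  So for every \<mu> at most (|\<mu>|/r + 2) #\<partial>\<Omega> lattice points l see \<chi>(l) \<noteq> \<chi>(l - \<mu>).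
  Writing \<chi> - \<chi> * \<phi> = \<chi> (1 - \<Sum>\<phi>) + \<Sum>\<^sub>\<mu> (\<chi>(l) - \<chi>(l - \<mu>)) \<phi>(\<mu>) and summing over l
  gives the estimate with C = 2 + 1/r.
*)

lemma has_sum_sum:
  fixes f :: "'i \<Rightarrow> 'a \<Rightarrow> 'b::topological_comm_monoid_add"
  assumes "finite I" "\<And>i. i \<in> I \<Longrightarrow> (f i has_sum s i) A"
  shows "((\<lambda>x. \<Sum>i\<in>I. f i x) has_sum (\<Sum>i\<in>I. s i)) A"
  using assms
proof (induction I rule: finite_induct)
  case empty
  show ?case
    by simp
next
  case (insert j I)
  have "((\<lambda>x. f j x + (\<Sum>i\<in>I. f i x)) has_sum (s j + (\<Sum>i\<in>I. s i))) A"
    using insert.prems insert.IH by (intro has_sum_add) auto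
  with insert.hyps show ?case
    by simp
qed

lemma lattice_diff:
  assumes "x \<in> lattice M" "y \<in> lattice M"
  shows "x - y \<in> lattice M"
proof -
  obtain a b where "x = M *v (\<chi> i. of_int (a $ i))" "y = M *v (\<chi> i. of_int (b $ i))"
    using assms unfolding lattice_def by auto
  then have "x - y = M *v ((\<chi> i. of_int (a $ i)) - (\<chi> i. of_int (b $ i)))"
    by (simp add: matrix_vector_mult_diff_distrib)
  also have "(\<chi> i. of_int (a $ i)) - (\<chi> i. of_int (b $ i)) = (\<chi> i. (of_int ((a - b) $ i) :: real))"
    by (simp add: vec_eq_iff)
  finally show ?thesis
    unfolding lattice_def by blast
qed

lemma bij_betw_lattice_reflect:
  assumes "l \<in> lattice M"
  shows "bij_betw (\<lambda>\<mu>. l - \<mu>) (lattice M) (lattice M)"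
  by (rule bij_betwI[where g = "\<lambda>\<mu>. l - \<mu>"]) (use assms lattice_diff in auto)

lemma finite_int_vectors_in_box: "finite {k :: int^'n. \<forall>i. \<bar>k $ i\<bar> \<le> B}"
proof (rule finite_imageD)
  have "vec_nth ` {k :: int^'n. \<forall>i. \<bar>k $ i\<bar> \<le> B} \<subseteq> PiE UNIV (\<lambda>_. {-B..B})"
    by (auto simp: abs_le_iff minus_le_iff)
  then show "finite (vec_nth ` {k :: int^'n. \<forall>i. \<bar>k $ i\<bar> \<le> B})"
    by (rule finite_subset) (intro finite_PiE, auto)
qed (simp add: inj_on_def vec_eq_iff)

lemma finite_lattice_Int_bounded:
  assumes "invertible M" and "bounded S"
  shows "finite (lattice M \<inter> S)"
proof -
  obtain B where BM: "B ** M = mat 1"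
    using assms(1) invertible_left_inverse by blast
  have "bounded ((*v) B ` S)"
    using assms(2) by (intro bounded_linear_image) auto
  then obtain R where R: "\<And>x. x \<in> S \<Longrightarrow> norm (B *v x) \<le> R"
    by (auto simp: bounded_iff)
  have "lattice M \<inter> S \<subseteq> (\<lambda>k. M *v (\<chi> i. of_int (k $ i))) ` {k. \<forall>i. \<bar>k $ i\<bar> \<le> \<lceil>R\<rceil>}"
  proof
    fix x assume x: "x \<in> lattice M \<inter> S"
    then obtain k where k: "x = M *v (\<chi> i. of_int (k $ i))"
      unfolding lattice_def by auto
    have "B *v x = (\<chi> i. of_int (k $ i))"
      by (simp add: k matrix_vector_mul_assoc BM)
    then have "\<bar>of_int (k $ i)\<bar> \<le> R" for i
      using component_le_norm_cart[of "B *v x" i] R[of x] x by auto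
    then have "\<bar>k $ i\<bar> \<le> \<lceil>R\<rceil>" for i
      by (metis ceiling_mono ceiling_of_int of_int_abs)
    with k show "x \<in> (\<lambda>k. M *v (\<chi> i. of_int (k $ i))) ` {k. \<forall>i. \<bar>k $ i\<bar> \<le> \<lceil>R\<rceil>}"
      by auto
  qed
  then show ?thesis
    using finite_int_vectors_in_box finite_subset by blast
qed

lemma finite_lattice_boundary:
  assumes "invertible M" and "bounded \<Omega>"
  shows "finite (lattice_boundary (lattice M) \<rho> \<Omega>)"
proof -
  have "bounded (frontier \<Omega>)"
    using assms(2) unfolding frontier_def by (intro bounded_diff bounded_closure)
  then have "bounded (\<Union>x\<in>frontier \<Omega>. \<Union>y\<in>ball 0 \<rho>. {x + y})"
    by (intro bounded_sums) auto
  moreover have "lattice_boundary (lattice M) \<rho> \<Omega> \<subseteq> lattice M \<inter> (\<Union>x\<in>frontier \<Omega>. \<Union>y\<in>ball 0 \<rho>. {x + y})"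
    unfolding lattice_boundary_def by blast
  ultimately show ?thesis
    using finite_lattice_Int_bounded[OF assms(1)] finite_subset by blast
qed

lemma lattice_tile_exists:
  assumes "invertible M"
  obtains q where "q \<in> lattice M" and "x - q \<in> fund_domain M"
proof -
  obtain B where MB: "M ** B = mat 1"
    using assms invertible_right_inverse by blast
  define v where "v = B *v x"
  define k where "k = (\<chi> i. \<lfloor>v $ i\<rfloor>)"
  define q where "q = M *v (\<chi> i. of_int (k $ i))"
  have "x - q = M *v (v - (\<chi> i. of_int (k $ i)))"
    by (simp add: q_def v_def matrix_vector_mult_diff_distrib matrix_vector_mul_assoc MB)
  moreover have "0 \<le> (v - (\<chi> i. of_int (k $ i))) $ i \<and> (v - (\<chi> i. of_int (k $ i))) $ i < 1" for i
    by (simp add: k_def) linarith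
  ultimately have "x - q \<in> fund_domain M"
    unfolding fund_domain_def by blast
  moreover have "q \<in> lattice M"
    unfolding q_def lattice_def by blast
  ultimately show ?thesis
    using that by blast
qed

lemma lattice_tile_unique:
  assumes "invertible M" "x - q \<in> fund_domain M" "y - q \<in> fund_domain M" "x - y \<in> lattice M"
  shows "x = y"
proof -
  obtain a where a: "x - q = M *v a" "\<forall>i. 0 \<le> a $ i \<and> a $ i < 1"
    using assms(2) unfolding fund_domain_def by auto
  obtain b where b: "y - q = M *v b" "\<forall>i. 0 \<le> b $ i \<and> b $ i < 1"
    using assms(3) unfolding fund_domain_def by auto
  obtain k where k: "x - y = M *v (\<chi> i. of_int (k $ i))"
    using assms(4) unfolding lattice_def by auto
  have "inj ((*v) M)"
    using assms(1) invertible_left_inverse matrix_left_invertible_injective by blast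
  moreover have "M *v (a - b) = M *v (\<chi> i. of_int (k $ i))"
    by (simp add: matrix_vector_mult_diff_distrib flip: a(1) b(1) k)
  ultimately have ab: "a - b = (\<chi> i. of_int (k $ i))"
    by (meson injD)
  have "k $ i = 0" for i
  proof -
    have "of_int (k $ i) = a $ i - b $ i"
      using ab by (metis vec_lambda_beta vector_minus_component)
    moreover have "\<bar>a $ i - b $ i\<bar> < 1"
      using a(2)[rule_format, of i] b(2)[rule_format, of i] by (simp add: abs_less_iff)
    ultimately have "\<bar>k $ i\<bar> < 1"
      by (metis of_int_abs of_int_less_1_iff)
    then show ?thesis
      by simp
  qed
  with k show ?thesis
    by (simp add: vec_eq_iff zero_vec_def[symmetric])
qed

lemma bounded_fund_domain: "bounded (fund_domain M)"
proof -
  have "norm x \<le> real CARD('n)" if "\<forall>i. 0 \<le> x $ i \<and> x $ i < 1" for x :: "real^'n"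
  proof -
    have "(\<Sum>i\<in>UNIV. \<bar>x $ i\<bar>) \<le> (\<Sum>i\<in>(UNIV::'n set). 1)"
      using that by (intro sum_mono) (simp add: abs_of_nonneg less_imp_le)
    then show ?thesis
      using norm_le_l1_cart[of x] by simp
  qed
  then have "bounded {x :: real^'n. \<forall>i. 0 \<le> x $ i \<and> x $ i < 1}"
    unfolding bounded_iff by blast
  then show ?thesis
    unfolding fund_domain_def by (intro bounded_linear_image) auto
qed

lemma norm_le_lM:
  assumes "a \<in> fund_domain M"
  shows "norm a \<le> lM M"
proof -
  have "0 \<in> fund_domain M"
    unfolding fund_domain_def by (auto intro!: image_eqI[where x = 0])
  from diameter_bounded_bound[OF bounded_fund_domain this assms] show ?thesis
    by (simp add: lM_def dist_norm)
qed

lemma segment_meets_frontier: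
  fixes l \<mu> :: "'a::real_normed_vector"
  assumes "(l \<in> \<Omega>) \<noteq> (l - \<mu> \<in> \<Omega>)"
  obtains u where "0 \<le> u" "u \<le> 1" "l - u *\<^sub>R \<mu> \<in> frontier \<Omega>"
proof -
  let ?S = "closed_segment l (l - \<mu>)"
  have "l \<in> ?S" "l - \<mu> \<in> ?S"
    by (rule ends_in_segment)+
  with assms have "?S \<inter> \<Omega> \<noteq> {}" "?S - \<Omega> \<noteq> {}"
    by (cases "l \<in> \<Omega>"; blast)+
  then obtain z where z: "z \<in> ?S" "z \<in> frontier \<Omega>"
    using connected_Int_frontier[OF connected_segment] by blast
  then obtain u where u: "0 \<le> u" "u \<le> 1" "z = (1 - u) *\<^sub>R l + u *\<^sub>R (l - \<mu>)"
    unfolding in_segment(1) by blast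
  have "z = l - u *\<^sub>R \<mu>"
    unfolding u(3) by (simp add: algebra_simps)
  with u(1,2) z(2) show ?thesis
    by (rule_tac that) auto
qed

lemma grid_point_near:
  fixes \<mu> :: "'a::real_normed_vector"
  assumes "r > 0" "0 \<le> u" "u \<le> 1"
  defines "N \<equiv> nat \<lceil>norm \<mu> / r\<rceil>"
  obtains k where "k \<le> N" "norm ((u - real k / real N) *\<^sub>R \<mu>) < r"
proof (cases "\<mu> = 0")
  case True
  with that[of 0] assms(1) show ?thesis
    by simp
next
  case False
  then have "norm \<mu> / r > 0"
    using assms(1) by simp
  then have N: "real N \<ge> norm \<mu> / r" "N \<ge> 1"
    unfolding N_def by linarith+
  define k where "k = nat \<lfloor>u * real N\<rfloor>"
  have "u * real N \<ge> 0"
    using assms(2) by simp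
  then have k: "real k \<le> u * real N" "u * real N < real k + 1"
    unfolding k_def by linarith+
  have "real k \<le> real N"
    using k(1) mult_left_le_one_le[OF _ assms(2,3), of "real N"] by simp
  then have "k \<le> N"
    by simp
  have "norm ((u - real k / real N) *\<^sub>R \<mu>) = \<bar>u * real N - real k\<bar> / real N * norm \<mu>"
    using N(2) by (simp add: field_simps)
  also have "\<dots> < 1 / real N * norm \<mu>"
    using k N(2) False by (intro mult_strict_right_mono divide_strict_right_mono) auto
  also have "\<dots> \<le> r"
    using N assms(1) by (simp add: field_simps)
  finally show ?thesis
    using \<open>k \<le> N\<close> that by blast
qed

lemma crossing_near_lattice_boundary:
  assumes "invertible M" "r > 0" "(l \<in> \<Omega>) \<noteq> (l - \<mu> \<in> \<Omega>)"
  defines "N \<equiv> nat \<lceil>norm \<mu> / r\<rceil>"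
  obtains k q where "k \<le> N" "q \<in> lattice_boundary (lattice M) (r + lM M) \<Omega>"
    "l - (real k / real N) *\<^sub>R \<mu> - q \<in> fund_domain M"
proof -
  obtain u where u: "0 \<le> u" "u \<le> 1" and z: "l - u *\<^sub>R \<mu> \<in> frontier \<Omega>"
    using segment_meets_frontier[OF assms(3)] by blast
  obtain k where k: "k \<le> N" "norm ((u - real k / real N) *\<^sub>R \<mu>) < r"
    using grid_point_near[OF assms(2) u] unfolding N_def by blast
  define p where "p = l - (real k / real N) *\<^sub>R \<mu>"
  obtain q where q: "q \<in> lattice M" "p - q \<in> fund_domain M"
    using lattice_tile_exists[OF assms(1)] by blast
  have "q - (l - u *\<^sub>R \<mu>) = (q - p) + (u - real k / real N) *\<^sub>R \<mu>"
    by (simp add: p_def algebra_simps)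
  then have "norm (q - (l - u *\<^sub>R \<mu>)) \<le> norm (p - q) + norm ((u - real k / real N) *\<^sub>R \<mu>)"
    using norm_triangle_ineq[of "q - p"] norm_minus_commute[of q p] by metis
  also have "\<dots> < r + lM M"
    using norm_le_lM[OF q(2)] k(2) by simp
  finally have "q - (l - u *\<^sub>R \<mu>) \<in> ball 0 (r + lM M)"
    by simp
  moreover have "q = (l - u *\<^sub>R \<mu>) + (q - (l - u *\<^sub>R \<mu>))"
    by simp
  ultimately have "q \<in> lattice_boundary (lattice M) (r + lM M) \<Omega>"
    unfolding lattice_boundary_def using q(1) z by blast
  with k(1) q(2) that show ?thesis
    unfolding p_def by blast
qed

lemma inj_on_tile_label:
  assumes "invertible M" "D \<subseteq> lattice M"
    and "\<And>l. l \<in> D \<Longrightarrow> l - t (fst (f l)) - snd (f l) \<in> fund_domain M"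
  shows "inj_on f D"
proof (rule inj_onI)
  fix x y assume xy: "x \<in> D" "y \<in> D" "f x = f y"
  define c where "c = t (fst (f x))"
  have "(x - c) - (y - c) \<in> lattice M"
    using lattice_diff xy(1,2) assms(2) by simp blast
  moreover have "x - c - snd (f x) \<in> fund_domain M"
    using assms(3)[OF xy(1)] unfolding c_def .
  moreover have "y - c - snd (f x) \<in> fund_domain M"
    using assms(3)[OF xy(2)] unfolding c_def xy(3) .
  ultimately have "x - c = y - c"
    using lattice_tile_unique[OF assms(1)] by blast
  then show "x = y"
    by simp
qed

lemma card_crossings_le:
  assumes "invertible M" "r > 0" "G \<subseteq> lattice M"
    and "finite (lattice_boundary (lattice M) (r + lM M) \<Omega>)"
  shows "real (card {l \<in> G. (l \<in> \<Omega>) \<noteq> (l - \<mu> \<in> \<Omega>)})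
    \<le> (norm \<mu> / r + 2) * real (card (lattice_boundary (lattice M) (r + lM M) \<Omega>))"
proof -
  define Bd where "Bd = lattice_boundary (lattice M) (r + lM M) \<Omega>"
  define N where "N = nat \<lceil>norm \<mu> / r\<rceil>"
  define D where "D = {l \<in> G. (l \<in> \<Omega>) \<noteq> (l - \<mu> \<in> \<Omega>)}"
  define t where "t = (\<lambda>k. (real k / real N) *\<^sub>R \<mu>)"
  have "\<exists>p \<in> {..N} \<times> Bd. l - t (fst p) - snd p \<in> fund_domain M" if "l \<in> D" for l
  proof -
    have "(l \<in> \<Omega>) \<noteq> (l - \<mu> \<in> \<Omega>)"
      using that unfolding D_def by blast
    then obtain k q where "k \<le> N" "q \<in> Bd" "l - t k - q \<in> fund_domain M"
      unfolding Bd_def N_def t_def by (rule crossing_near_lattice_boundary[OF assms(1,2)])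
    then show ?thesis
      by (intro bexI[of _ "(k, q)"]) auto
  qed
  then have "\<forall>l\<in>D. \<exists>p. p \<in> {..N} \<times> Bd \<and> l - t (fst p) - snd p \<in> fund_domain M"
    by blast
  from bchoice[OF this] obtain f
    where f: "\<forall>l\<in>D. f l \<in> {..N} \<times> Bd \<and> l - t (fst (f l)) - snd (f l) \<in> fund_domain M"
    by blast
  have "inj_on f D"
    using inj_on_tile_label[OF assms(1), of D t f] f assms(3) unfolding D_def by blast
  moreover have "f ` D \<subseteq> {..N} \<times> Bd"
    using f by blast
  moreover have "finite ({..N} \<times> Bd)"
    using assms(4) unfolding Bd_def by simp
  ultimately have "card D \<le> card ({..N} \<times> Bd)"
    by (rule card_inj_on_le)
  also have "\<dots> = (N + 1) * card Bd"
    by (simp add: card_cartesian_product)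
  finally have "real (card D) \<le> real ((N + 1) * card Bd)"
    by (rule of_nat_mono)
  also have "\<dots> = (real N + 1) * real (card Bd)"
    by (simp add: algebra_simps)
  also have "\<dots> \<le> (norm \<mu> / r + 2) * real (card Bd)"
  proof (rule mult_right_mono)
    have "norm \<mu> / r \<ge> 0"
      using assms(2) by simp
    then show "real N + 1 \<le> norm \<mu> / r + 2"
      unfolding N_def by linarith
  qed simp
  finally show ?thesis
    unfolding D_def Bd_def .
qed

lemma chi_eq_of_bool: "chi \<Omega> x = of_bool (x \<in> \<Omega>)"
  by (simp add: chi_def)

lemma lconv_chi_has_sum:
  assumes "finite (\<Omega> \<inter> lattice M)" "l \<in> lattice M"
  shows "((\<lambda>\<mu>. chi \<Omega> (l - \<mu>) * \<phi> \<mu>) has_sum lconv (lattice M) (chi \<Omega>) \<phi> l) (lattice M)"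
proof -
  let ?f = "\<lambda>l'. chi \<Omega> l' * \<phi> (l - l')"
  have "?f summable_on \<Omega> \<inter> lattice M"
    using assms(1) by (rule summable_on_finite)
  then have "?f summable_on lattice M"
    by (rule summable_on_cong_neutral[THEN iffD1, rotated -1]) (auto simp: chi_def)
  then have "(?f has_sum lconv (lattice M) (chi \<Omega>) \<phi> l) (lattice M)"
    unfolding lconv_def by (rule has_sum_infsum)
  then show ?thesis
    using has_sum_reindex_bij_betw[OF bij_betw_lattice_reflect[OF assms(2)], of ?f] by simp
qed

lemma abs_chi_minus_lconv_le:
  assumes "finite (\<Omega> \<inter> lattice M)" "l \<in> lattice M"
    and "\<forall>\<mu>\<in>lattice M. \<phi> \<mu> \<ge> 0" "\<phi> summable_on lattice M" "infsum \<phi> (lattice M) \<le> 1"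
  shows "\<bar>chi \<Omega> l - lconv (lattice M) (chi \<Omega>) \<phi> l\<bar>
    \<le> chi \<Omega> l * (1 - infsum \<phi> (lattice M))
      + (\<Sum>\<^sub>\<infinity>\<mu>\<in>lattice M. of_bool ((l \<in> \<Omega>) \<noteq> (l - \<mu> \<in> \<Omega>)) * \<phi> \<mu>)"
proof -
  define S where "S = infsum \<phi> (lattice M)"
  define c where "c = lconv (lattice M) (chi \<Omega>) \<phi> l"
  define k where "k = (\<lambda>\<mu>. chi \<Omega> l * \<phi> \<mu> + - (chi \<Omega> (l - \<mu>) * \<phi> \<mu>))"
  define h where "h = (\<lambda>\<mu>. of_bool ((l \<in> \<Omega>) \<noteq> (l - \<mu> \<in> \<Omega>)) * \<phi> \<mu>)"
  have "(k has_sum (chi \<Omega> l * S + - c)) (lattice M)"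
    unfolding k_def S_def c_def using assms(1,2,4)
    by (intro has_sum_add has_sum_cmult_right has_sum_infsum has_sum_uminusI lconv_chi_has_sum)
  moreover have "((\<lambda>\<mu>. norm (k \<mu>)) has_sum infsum h (lattice M)) (lattice M)"
  proof -
    have "h summable_on lattice M"
      unfolding h_def by (rule summable_on_comparison_test[OF assms(4)]) (use assms(3) in auto)
    moreover have "norm (k \<mu>) = h \<mu>" if "\<mu> \<in> lattice M" for \<mu>
      using assms(3) that by (simp add: k_def h_def chi_def)
    ultimately show ?thesis
      using has_sum_cong[of "lattice M" "\<lambda>\<mu>. norm (k \<mu>)" h] has_sum_infsum by blast
  qed
  ultimately have "\<bar>chi \<Omega> l * S + - c\<bar> \<le> infsum h (lattice M)"
    using norm_has_sum_bound[of k] by simp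
  moreover have "\<bar>chi \<Omega> l * (1 - S)\<bar> = chi \<Omega> l * (1 - S)"
    using assms(5) by (simp add: S_def chi_def)
  moreover have "\<bar>chi \<Omega> l - c\<bar> \<le> \<bar>chi \<Omega> l * (1 - S)\<bar> + \<bar>chi \<Omega> l * S + - c\<bar>"
    using abs_triangle_ineq[of "chi \<Omega> l * (1 - S)" "chi \<Omega> l * S + - c"] by (simp add: algebra_simps)
  ultimately show ?thesis
    unfolding S_def c_def h_def by linarith
qed

lemma sum_crossing_weights_le:
  assumes "invertible M" "r > 0" "finite F" "F \<subseteq> lattice M"
    and "finite (lattice_boundary (lattice M) (r + lM M) \<Omega>)"
    and "\<forall>\<mu>\<in>lattice M. \<phi> \<mu> \<ge> 0" "\<phi> summable_on lattice M"
    and "(\<lambda>\<mu>. norm \<mu> * \<bar>\<phi> \<mu>\<bar>) summable_on lattice M"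
  defines "b \<equiv> real (card (lattice_boundary (lattice M) (r + lM M) \<Omega>))"
  shows "(\<Sum>l\<in>F. \<Sum>\<^sub>\<infinity>\<mu>\<in>lattice M. of_bool ((l \<in> \<Omega>) \<noteq> (l - \<mu> \<in> \<Omega>)) * \<phi> \<mu>)
    \<le> b / r * (\<Sum>\<^sub>\<infinity>\<mu>\<in>lattice M. norm \<mu> * \<bar>\<phi> \<mu>\<bar>) + 2 * b * infsum \<phi> (lattice M)"
proof -
  let ?L = "lattice M"
  let ?h = "\<lambda>l \<mu>. of_bool ((l \<in> \<Omega>) \<noteq> (l - \<mu> \<in> \<Omega>)) * \<phi> \<mu>"
  have "?h l summable_on ?L" for l
    by (rule summable_on_comparison_test[OF assms(7)]) (use assms(6) in auto)
  then have "((\<lambda>\<mu>. \<Sum>l\<in>F. ?h l \<mu>) has_sum (\<Sum>l\<in>F. infsum (?h l) ?L)) ?L"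
    by (intro has_sum_sum assms(3) has_sum_infsum)
  moreover have "((\<lambda>\<mu>. b / r * (norm \<mu> * \<bar>\<phi> \<mu>\<bar>) + 2 * b * \<phi> \<mu>) has_sum
      (b / r * (\<Sum>\<^sub>\<infinity>\<mu>\<in>?L. norm \<mu> * \<bar>\<phi> \<mu>\<bar>) + 2 * b * infsum \<phi> ?L)) ?L"
    by (intro has_sum_add has_sum_cmult_right has_sum_infsum assms(7,8))
  moreover have "(\<Sum>l\<in>F. ?h l \<mu>) \<le> b / r * (norm \<mu> * \<bar>\<phi> \<mu>\<bar>) + 2 * b * \<phi> \<mu>" if "\<mu> \<in> ?L" for \<mu>
  proof -
    have "(\<Sum>l\<in>F. ?h l \<mu>) = real (card {l \<in> F. (l \<in> \<Omega>) \<noteq> (l - \<mu> \<in> \<Omega>)}) * \<phi> \<mu>"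
      using assms(3) by (simp add: sum_distrib_right[symmetric] Int_def)
    also have "\<dots> \<le> ((norm \<mu> / r + 2) * b) * \<phi> \<mu>"
      using card_crossings_le[OF assms(1,2,4,5)] assms(6) that
      unfolding b_def by (intro mult_right_mono) auto
    also have "\<dots> = b / r * (norm \<mu> * \<bar>\<phi> \<mu>\<bar>) + 2 * b * \<phi> \<mu>"
      using assms(6) that by (simp add: field_simps)
    finally show ?thesis .
  qed
  ultimately show ?thesis
    by (rule has_sum_mono)
qed

lemma l1norm_chi_minus_lconv_le:
  fixes \<phi> :: "real^'n \<Rightarrow> real"
  assumes M: "invertible M" and r: "r > 0" and \<Omega>: "bounded \<Omega>"
    and \<phi>_nonneg: "\<forall>\<mu>\<in>lattice M. \<phi> \<mu> \<ge> 0" and \<phi>_summable: "\<phi> summable_on lattice M"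
    and mass: "1 - \<delta> \<le> infsum \<phi> (lattice M)" "infsum \<phi> (lattice M) \<le> 1"
    and moment: "(\<lambda>\<mu>. norm \<mu> * \<bar>\<phi> \<mu>\<bar>) summable_on lattice M"
  defines "g \<equiv> \<lambda>l. chi \<Omega> l - lconv (lattice M) (chi \<Omega>) \<phi> l"
    and "m \<equiv> \<Sum>\<^sub>\<infinity>\<mu>\<in>lattice M. norm \<mu> * \<bar>\<phi> \<mu>\<bar>"
    and "b \<equiv> real (card (lattice_boundary (lattice M) (r + lM M) \<Omega>))"
  shows "(\<lambda>l. \<bar>g l\<bar>) summable_on lattice M"
    and "l1norm (lattice M) g \<le> (2 + 1 / r) * (m + 1) * b + \<delta> * real (card (\<Omega> \<inter> lattice M))"
proof -
  let ?L = "lattice M"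
  define S where "S = infsum \<phi> ?L"
  define bound where "bound = (2 + 1 / r) * (m + 1) * b + \<delta> * real (card (\<Omega> \<inter> ?L))"
  have \<Omega>_fin: "finite (\<Omega> \<inter> ?L)"
    using finite_lattice_Int_bounded[OF M \<Omega>] by (simp add: Int_commute)
  have partial_sums: "(\<Sum>l\<in>F. \<bar>g l\<bar>) \<le> bound" if F: "finite F" "F \<subseteq> ?L" for F
  proof -
    let ?H = "\<lambda>l. \<Sum>\<^sub>\<infinity>\<mu>\<in>?L. of_bool ((l \<in> \<Omega>) \<noteq> (l - \<mu> \<in> \<Omega>)) * \<phi> \<mu>"
    have "(\<Sum>l\<in>F. \<bar>g l\<bar>) \<le> (\<Sum>l\<in>F. chi \<Omega> l * (1 - S) + ?H l)"
      using abs_chi_minus_lconv_le[OF \<Omega>_fin _ \<phi>_nonneg \<phi>_summable mass(2)] F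
      unfolding g_def S_def by (intro sum_mono) auto
    also have "\<dots> = (1 - S) * real (card (F \<inter> \<Omega>)) + (\<Sum>l\<in>F. ?H l)"
      using F(1) by (simp add: sum.distrib chi_eq_of_bool sum_distrib_right[symmetric] mult.commute)
    also have "(1 - S) * real (card (F \<inter> \<Omega>)) \<le> \<delta> * real (card (\<Omega> \<inter> ?L))"
    proof (rule mult_mono)
      show "real (card (F \<inter> \<Omega>)) \<le> real (card (\<Omega> \<inter> ?L))"
        using F \<Omega>_fin by (intro of_nat_mono card_mono) auto
    qed (use mass in \<open>auto simp: S_def\<close>)
    also have "(\<Sum>l\<in>F. ?H l) \<le> b / r * m + 2 * b * S"
      using sum_crossing_weights_le[OF M r F finite_lattice_boundary[OF M \<Omega>] \<phi>_nonneg \<phi>_summable moment]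
      unfolding b_def m_def S_def .
    also have "b / r * m + 2 * b * S \<le> (2 + 1 / r) * (m + 1) * b"
    proof -
      have "m \<ge> 0" "b \<ge> 0"
        unfolding m_def b_def by (simp_all add: infsum_nonneg)
      then have "2 * b * S \<le> 2 * b" "(2 * m + 1 / r) * b \<ge> 0"
        using mass(2) r unfolding S_def by (simp_all add: mult_left_le)
      moreover have "(2 + 1 / r) * (m + 1) * b = b / r * m + 2 * b + (2 * m + 1 / r) * b"
        using r by (simp add: field_simps)
      ultimately show ?thesis
        by linarith
    qed
    finally show ?thesis
      unfolding bound_def by linarith
  qed
  show summable: "(\<lambda>l. \<bar>g l\<bar>) summable_on ?L"
    using partial_sums by (intro nonneg_bdd_above_summable_on bdd_aboveI[of _ bound]) auto
  show "l1norm ?L g \<le> bound"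
    unfolding l1norm_def by (rule infsum_le_finite_sums[OF summable partial_sums])
qed

theorem proposition2p2:
  fixes d :: nat and M :: "real^'n^'n" and r :: real
  assumes "d \<ge> 1" and "CARD('n) = 2 * d"
    and "invertible M" and "r > 0"
  shows "\<exists>C::real. \<forall>(\<phi>::real^'n \<Rightarrow> real) (\<delta>::real) (\<Omega>::(real^'n) set).
           (\<forall>l\<in>lattice M. \<phi> l \<ge> 0) \<and> \<phi> summable_on lattice M \<and>
           0 \<le> \<delta> \<and> \<delta> \<le> 1 \<and>
           1 - \<delta> \<le> (\<Sum>\<^sub>\<infinity>l\<in>lattice M. \<phi> l) \<and> (\<Sum>\<^sub>\<infinity>l\<in>lattice M. \<phi> l) \<le> 1 \<and>
           (\<lambda>l. norm l * \<bar>\<phi> l\<bar>) summable_on lattice M \<and>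
           compact \<Omega>
           \<longrightarrow> (\<lambda>l. \<bar>chi \<Omega> l - lconv (lattice M) (chi \<Omega>) \<phi> l\<bar>) summable_on lattice M \<and>
               l1norm (lattice M) (\<lambda>l. chi \<Omega> l - lconv (lattice M) (chi \<Omega>) \<phi> l)
                 \<le> C * ((\<Sum>\<^sub>\<infinity>l\<in>lattice M. norm l * \<bar>\<phi> l\<bar>) + 1)
                     * real (card (lattice_boundary (lattice M) (r + lM M) \<Omega>))
                   + \<delta> * real (card (\<Omega> \<inter> lattice M))"
  using l1norm_chi_minus_lconv_le[OF assms(3,4) compact_imp_bounded]
  by (intro exI[of _ "2 + 1 / r"]) blast

end
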